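(* If $k \geq 9$ and $|q - q_k| \leq q_k^{-2k-6}$, then there exists a sequence $(c_j)_{j\ge1} \in 1^k0^{k+4}W_2^\mathbb{N}$ such that $\sum_{j\ge1} c_j q^{-j} = 1$.
   Context: $q_k$ is the unique root in $(1,2)$ of $x^k - x^{k-1} - \cdots - x - 1 = 0$. $W_2 = \{(-1\,0), (0\,{-1}), (00), (01), (10)\}$ is a set of words of length 2 over $\{-1,0,1\}$, and $W_2^\mathbb{N}$ is the set of infinite concatenations of elements of $W_2$. $1^k0^{k+4}W_2^\mathbb{N}$ is the set of sequences in $\{-1,0,1\}^\mathbb{N}$ whose first $2k+4$ entries are $k$ ones followed by $k+4$ zeros and whose tail from index $2k+5$ lies in $W_2^\mathbb{N}$. *)

theory Defs
  imports Complex_Main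
begin

definition qk :: "nat \<Rightarrow> real" where
  "qk k = (THE x. 1 < x \<and> x < 2 \<and> x ^ k - (\<Sum>i<k. x ^ i) = 0)"

definition W2 :: "(int \<times> int) set" where
  "W2 = {(-1, 0), (0, -1), (0, 0), (0, 1), (1, 0)}"

text \<open>Sequences are 0-indexed here: c n is the paper's c_(n+1).
  Membership in 1^k 0^(k+4) W_2^N.\<close>
definition in_pattern :: "nat \<Rightarrow> (nat \<Rightarrow> int) \<Rightarrow> bool" where
  "in_pattern k c \<longleftrightarrow>
     (\<forall>n<k. c n = 1) \<and>
     (\<forall>n. k \<le> n \<and> n < 2 * k + 4 \<longrightarrow> c n = 0) \<and>
     (\<forall>m. (c (2 * k + 4 + 2 * m), c (2 * k + 5 + 2 * m)) \<in> W2)"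

end

theory Submission
  imports Defs
begin

text \<open>Since q_k^-1 + ... + q_k^-k = 1, the prefix 1^k contributes almost exactly 1, and the
  closeness of q to q_k makes the rescaled defect t = (1 - (q^-1 + ... + q^-k)) q^(2k+4) satisfy
  |t| <= 3/5. The tail must then expand t in base q^2 with digit values a q + b, (a, b) in W_2,
  i.e. in {-q, -1, 0, 1, q}. For q close to 2, rounding to the nearest digit value keeps every
  remainder q^2 r - (a q + b) in [-3/5, 3/5], and bounded remainders force the expansion to
  converge to t.\<close>

definition recip_sum :: "nat \<Rightarrow> real \<Rightarrow> real" where
  "recip_sum k x = (\<Sum>i<k. 1 / x ^ Suc i)"

lemma power_mult_recip_sum:
  assumes "x \<noteq> 0"
  shows "x ^ k * recip_sum k x = (\<Sum>i<k. x ^ i)"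
proof (induction k)
  case 0
  then show ?case by (simp add: recip_sum_def)
next
  case (Suc k)
  have "x ^ Suc k * recip_sum (Suc k) x = x * (x ^ k * recip_sum k x) + 1"
    using assms by (simp add: recip_sum_def field_simps)
  also have "\<dots> = (\<Sum>i<Suc k. x ^ i)"
    by (subst sum.lessThan_Suc_shift) (simp add: Suc sum_distrib_left)
  finally show ?case .
qed

lemma recip_sum_times_diff_one:
  assumes "x \<noteq> 0"
  shows "recip_sum k x * (x - 1) = 1 - 1 / x ^ k"
proof -
  have "x ^ k * (recip_sum k x * (x - 1)) = x ^ k - 1"
    using power_mult_recip_sum[OF assms] power_diff_1_eq[of x k] by (simp add: ac_simps)
  then show ?thesis
    using assms by (simp add: field_simps)
qed

lemma recip_sum_strict_antimono:
  assumes "0 < x" "x < y" "k \<ge> 1"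
  shows "recip_sum k y < recip_sum k x"
  unfolding recip_sum_def
proof (rule sum_strict_mono)
  show "1 / y ^ Suc i < 1 / x ^ Suc i" for i
    using assms by (intro divide_strict_left_mono power_strict_mono) auto
qed (use assms in \<open>auto simp: lessThan_empty_iff\<close>)

lemma qk_root:
  assumes "k \<ge> 2"
  shows "1 < qk k" "qk k < 2" "recip_sum k (qk k) = 1"
proof -
  have root_iff: "x ^ k - (\<Sum>i<k. x ^ i) = 0 \<longleftrightarrow> recip_sum k x = 1" if "x > 0" for x
    using power_mult_recip_sum[of x k] that by auto
  have "recip_sum k 2 \<le> 1" "1 \<le> recip_sum k 1"
    using recip_sum_times_diff_one[of 2 k] assms by (auto simp: recip_sum_def)
  moreover have "continuous_on {1..2} (recip_sum k)"
    unfolding recip_sum_def by (intro continuous_intros) auto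
  ultimately obtain x where x: "1 \<le> x" "x \<le> 2" "recip_sum k x = 1"
    using IVT2'[of "recip_sum k" 2 1 1] by auto
  have "x \<noteq> 1" "x \<noteq> 2"
    using x assms recip_sum_times_diff_one[of 2 k] by (auto simp: recip_sum_def)
  with x have x_between: "1 < x" "x < 2" by auto
  have unique: "y = x" if "1 < y" "recip_sum k y = 1" for y
    using recip_sum_strict_antimono[of y x k] recip_sum_strict_antimono[of x y k]
      that x x_between assms by (cases y x rule: linorder_cases) auto
  have "qk k = x"
    unfolding qk_def
  proof (rule the_equality)
    show "1 < x \<and> x < 2 \<and> x ^ k - (\<Sum>i<k. x ^ i) = 0"
      using x x_between root_iff by auto
  qed (use unique root_iff in force)
  then show "1 < qk k" "qk k < 2" "recip_sum k (qk k) = 1"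
    using x x_between by auto
qed

lemma qk_gt_199_100:
  assumes "k \<ge> 9"
  shows "199/100 < qk k"
proof -
  have "(100::real) < (199/100) ^ 9"
    by (simp add: eval_nat_numeral)
  also have "\<dots> \<le> (199/100) ^ k"
    using assms by (intro power_increasing) auto
  finally have "1 / (199/100) ^ k < (1/100::real)"
    by (intro divide_strict_left_mono) auto
  moreover have "recip_sum k (199/100) * (99/100) = 1 - 1 / (199/100) ^ k"
    using recip_sum_times_diff_one[of "199/100" k] by simp
  ultimately have "1 < recip_sum k (199/100)"
    by linarith
  moreover have "recip_sum k (qk k) = 1" "0 < qk k"
    using qk_root[of k] assms by auto
  ultimately have "\<not> qk k < 199/100" "qk k \<noteq> 199/100"
    using recip_sum_strict_antimono[of "qk k" "199/100" k] assms by (fastforce, metis less_irrefl)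
  then show ?thesis
    by linarith
qed

lemma abs_power_diff_le:
  fixes a b w :: real
  assumes "0 \<le> a" "a \<le> w" "0 \<le> b" "b \<le> w"
  shows "\<bar>a ^ n - b ^ n\<bar> \<le> n * w ^ (n - 1) * \<bar>a - b\<bar>"
proof -
  have "b ^ (n - Suc i) * a ^ i \<le> w ^ (n - 1)" if "i < n" for i
  proof -
    have "b ^ (n - Suc i) * a ^ i \<le> w ^ (n - Suc i) * w ^ i"
      using assms by (intro mult_mono power_mono) auto
    also have "\<dots> = w ^ (n - 1)"
      using that by (simp flip: power_add)
    finally show ?thesis .
  qed
  then have "(\<Sum>i<n. b ^ (n - Suc i) * a ^ i) \<le> (\<Sum>i<n. w ^ (n - 1))"
    by (intro sum_mono) auto
  then have "(\<Sum>i<n. b ^ (n - Suc i) * a ^ i) \<le> n * w ^ (n - 1)"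
    by simp
  moreover have "0 \<le> (\<Sum>i<n. b ^ (n - Suc i) * a ^ i)"
    using assms by (intro sum_nonneg) auto
  ultimately show ?thesis
    unfolding power_diff_sumr2[of a n b] abs_mult
    by (metis abs_ge_zero abs_of_nonneg mult.commute mult_right_mono)
qed

lemma recip_sum_lipschitz:
  fixes w x y :: real
  assumes "w < 1" "0 < x" "0 < y" "1 / x \<le> w" "1 / y \<le> w"
  shows "\<bar>recip_sum k x - recip_sum k y\<bar> \<le> \<bar>1 / x - 1 / y\<bar> / (1 - w)\<^sup>2"
proof -
  have w: "0 \<le> w" "norm w < 1"
    using assms by (auto simp: order_trans[of 0 "1/x" w])
  have "\<bar>recip_sum k x - recip_sum k y\<bar> = \<bar>\<Sum>i<k. (1/x) ^ Suc i - (1/y) ^ Suc i\<bar>"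
    by (simp add: recip_sum_def sum_subtractf power_one_over)
  also have "\<dots> \<le> (\<Sum>i<k. \<bar>(1/x) ^ Suc i - (1/y) ^ Suc i\<bar>)"
    by (rule sum_abs)
  also have "\<dots> \<le> (\<Sum>i<k. Suc i * w ^ i * \<bar>1/x - 1/y\<bar>)"
    using assms by (intro sum_mono abs_power_diff_le[of _ w, THEN order_trans]) auto
  also have "\<dots> = (\<Sum>i<k. Suc i * w ^ i) * \<bar>1/x - 1/y\<bar>"
    by (simp add: sum_distrib_right)
  also have "\<dots> \<le> 1 / (1 - w)\<^sup>2 * \<bar>1/x - 1/y\<bar>"
  proof (intro mult_right_mono)
    have sums: "(\<lambda>i. Suc i * w ^ i) sums (1 / (1 - w)\<^sup>2)"
      using geometric_deriv_sums[OF w(2)] by simp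
    have "(\<Sum>i<k. Suc i * w ^ i) \<le> (\<Sum>i. Suc i * w ^ i)"
      using sums w by (intro sum_le_suminf) (auto simp: sums_iff)
    then show "(\<Sum>i<k. Suc i * w ^ i) \<le> 1 / (1 - w)\<^sup>2"
      using sums by (simp add: sums_iff)
  qed simp
  finally show ?thesis
    by simp
qed

lemma power_le_twice_power_of_close:
  fixes x y d :: real
  assumes "0 < x" "0 < y" "\<bar>y - x\<bar> \<le> d" "2 * n * d \<le> y"
  shows "y ^ n \<le> 2 * x ^ n"
proof -
  define e where "e = x / y - 1"
  have "- (d / y) \<le> e" "- 1 \<le> e"
    using assms by (auto simp: e_def field_simps)
  have "n * (- (d / y)) \<le> n * e"
    using \<open>- (d / y) \<le> e\<close> by (intro mult_left_mono) auto
  moreover have "n * (d / y) \<le> 1 / 2"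
    using assms by (simp add: field_simps)
  ultimately have "1 / 2 \<le> 1 + n * e"
    by simp
  also have "\<dots> \<le> (1 + e) ^ n"
    using \<open>- 1 \<le> e\<close> by (rule Bernoulli_inequality)
  also have "\<dots> = x ^ n / y ^ n"
    by (simp add: e_def power_divide)
  finally show ?thesis
    using assms by (simp add: field_simps)
qed

lemma close_to_qk_bounds:
  assumes k: "k \<ge> 9" and close: "\<bar>q - qk k\<bar> \<le> 1 / qk k ^ (2 * k + 6)"
  shows "198/100 \<le> q" "q \<le> 201/100"
proof -
  have x: "199/100 < qk k" "qk k < 2"
    using qk_root[of k] qk_gt_199_100[OF k] k by auto
  have "(100::real) \<le> (199/100) ^ 7"
    by (simp add: eval_nat_numeral)
  also have "\<dots> \<le> qk k ^ 7"
    using x by (intro power_mono) auto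
  also have "\<dots> \<le> qk k ^ (2 * k + 6)"
    using x k by (intro power_increasing) auto
  finally have "1 / qk k ^ (2 * k + 6) \<le> 1/100"
    by (intro divide_left_mono) auto
  then have "\<bar>q - qk k\<bar> \<le> 1/100"
    using close by linarith
  then show "198/100 \<le> q" "q \<le> 201/100"
    using abs_le_D1 abs_le_D2 x by fastforce+
qed

lemma recip_sum_close_to_qk:
  assumes k: "k \<ge> 9" and close: "\<bar>q - qk k\<bar> \<le> 1 / qk k ^ (2 * k + 6)"
  shows "\<bar>1 - recip_sum k q\<bar> \<le> (198/98)\<^sup>2 / (qk k ^ (2 * k + 7) * q)"
proof -
  define x where "x = qk k"
  have x: "199/100 < x" "recip_sum k x = 1"
    using qk_root[of k] qk_gt_199_100[OF k] k by (auto simp: x_def)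
  have q: "198/100 \<le> q"
    using close_to_qk_bounds[OF assms] by simp
  have "\<bar>1/x - 1/q\<bar> = \<bar>q - x\<bar> / (x * q)"
    using x q by (simp add: field_simps abs_divide)
  also have "\<dots> \<le> 1 / x ^ (2 * k + 6) / (x * q)"
    using close x q by (intro divide_right_mono) (auto simp: x_def)
  also have "\<dots> = 1 / (x ^ (2 * k + 7) * q)"
    using power_Suc2[of x "2 * k + 6"] by (simp add: ac_simps)
  finally have recip_dist: "\<bar>1/x - 1/q\<bar> \<le> 1 / (x ^ (2 * k + 7) * q)" .
  have "\<bar>1 - recip_sum k q\<bar> \<le> \<bar>1/x - 1/q\<bar> / (1 - 100/198)\<^sup>2"
    using recip_sum_lipschitz[of "100/198" x q k] x q by (auto simp: field_simps)
  also have "\<dots> \<le> 1 / (x ^ (2 * k + 7) * q) / (1 - 100/198)\<^sup>2"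
    using recip_dist by (intro divide_right_mono) auto
  also have "\<dots> = (198/98)\<^sup>2 / (x ^ (2 * k + 7) * q)"
    by (simp add: power2_eq_square)
  finally show ?thesis
    by (simp add: x_def)
qed

lemma power_close_to_qk:
  assumes k: "k \<ge> 9" and close: "\<bar>q - qk k\<bar> \<le> 1 / qk k ^ (2 * k + 6)"
  shows "q ^ (2 * k + 3) \<le> 2 * qk k ^ (2 * k + 3)"
proof -
  define x where "x = qk k"
  define n where "n = 2 * k + 3"
  have x: "199/100 < x"
    using qk_gt_199_100[OF k] by (simp add: x_def)
  have q: "198/100 \<le> q"
    using close_to_qk_bounds[OF assms] by simp
  have "real n * (99/100) \<le> real n * (x - 1)"
    using x by (intro mult_left_mono) auto
  also have "\<dots> \<le> x ^ n"
    using Bernoulli_inequality[of "x - 1" n] x by simp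
  finally have "2 * n * (1 / x ^ (n + 3)) \<le> 2 * (100/99) / x ^ 3"
    using x by (simp add: field_simps power_add)
  also have "\<dots> \<le> 2 * (100/99) / (199/100) ^ 3"
    using x by (intro divide_left_mono power_mono) auto
  also have "\<dots> \<le> q"
    using q by (simp add: eval_nat_numeral)
  finally have "q ^ n \<le> 2 * x ^ n"
    using power_le_twice_power_of_close[of x q "1 / x ^ (n + 3)" n] close x q
    by (simp add: x_def n_def eval_nat_numeral)
  then show ?thesis
    by (simp add: x_def n_def)
qed

lemma rescaled_defect_close_to_qk:
  assumes k: "k \<ge> 9" and close: "\<bar>q - qk k\<bar> \<le> 1 / qk k ^ (2 * k + 6)"
  shows "\<bar>1 - recip_sum k q\<bar> * q ^ (2 * k + 4) \<le> 3/5"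
proof -
  define x where "x = qk k"
  define n where "n = 2 * k + 3"
  have x: "199/100 < x"
    using qk_gt_199_100[OF k] by (simp add: x_def)
  have q: "198/100 \<le> q"
    using close_to_qk_bounds[OF assms] by simp
  have powers: "x ^ (2 * k + 7) = x ^ n * x ^ 4" "q ^ (2 * k + 4) = q ^ n * q"
    unfolding n_def power_add[symmetric] power_Suc2[symmetric] by (simp_all add: ac_simps)
  have "\<bar>1 - recip_sum k q\<bar> * q ^ (2 * k + 4) \<le> (198/98)\<^sup>2 / (x ^ (2 * k + 7) * q) * q ^ (2 * k + 4)"
    using recip_sum_close_to_qk[OF assms] q by (intro mult_right_mono) (auto simp: x_def)
  also have "\<dots> = (198/98)\<^sup>2 * q ^ n / (x ^ n * x ^ 4)"
    unfolding powers using q by (simp add: field_simps)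
  also have "\<dots> \<le> (198/98)\<^sup>2 * (2 * x ^ n) / (x ^ n * x ^ 4)"
    using power_close_to_qk[OF assms] x by (intro divide_right_mono mult_left_mono) (auto simp: x_def n_def)
  also have "\<dots> = (198/98)\<^sup>2 * 2 / x ^ 4"
    using x by simp
  also have "\<dots> \<le> (198/98)\<^sup>2 * 2 / (199/100) ^ 4"
    using x by (intro divide_left_mono power_mono) auto
  also have "\<dots> \<le> 3/5"
    by (simp add: eval_nat_numeral)
  finally show ?thesis .
qed

lemma orbit_expansion_sums:
  fixes b B :: real and r v :: "nat \<Rightarrow> real"
  assumes b: "1 < b" and orbit: "\<And>m. r (Suc m) = b * r m - v m" and bounded: "\<And>m. \<bar>r m\<bar> \<le> B"
  shows "(\<lambda>m. v m / b ^ (m + 1)) sums r 0"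
proof -
  have telescope: "(\<Sum>m<N. v m / b ^ (m + 1)) = r 0 - r N / b ^ N" for N
  proof (induction N)
    case (Suc N)
    have "r (Suc N) / b ^ Suc N = r N / b ^ N - v N / b ^ (N + 1)"
      using b by (simp add: orbit diff_divide_distrib)
    then show ?case
      using Suc by simp
  qed simp
  have geometric: "(\<lambda>N. (1 / b) ^ N) \<longlonglongrightarrow> 0"
    using b by (intro LIMSEQ_power_zero) simp
  have bound: "norm (r N / b ^ N) \<le> norm ((1 / b) ^ N) * B" for N
  proof -
    have "norm (r N / b ^ N) = \<bar>r N\<bar> / b ^ N"
      using b by (simp add: abs_divide)
    also have "\<dots> \<le> B / b ^ N"
      using b bounded[of N] by (simp add: divide_right_mono)
    also have "\<dots> = norm ((1 / b) ^ N) * B"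
      using b by (simp add: power_one_over)
    finally show ?thesis .
  qed
  have "(\<lambda>N. r N / b ^ N) \<longlonglongrightarrow> 0"
    using geometric by (rule tendsto_0_le) (use bound in \<open>blast intro: always_eventually\<close>)
  then have "(\<lambda>N. r 0 - r N / b ^ N) \<longlonglongrightarrow> r 0 - 0"
    by (intro tendsto_diff tendsto_const)
  then show ?thesis
    unfolding sums_def telescope by simp
qed

definition pair_value :: "real \<Rightarrow> int \<times> int \<Rightarrow> real" where
  "pair_value q p = of_int (fst p) * q + of_int (snd p)"

text \<open>Rounds y to the nearest of the digit values -q, -1, 0, 1, q, taking q to be about 2.\<close>
definition W2_digit :: "real \<Rightarrow> int \<times> int" where
  "W2_digit y =
     (if 3/2 \<le> y then (1, 0) else if 1/2 \<le> y then (0, 1) else if -1/2 < y then (0, 0)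
      else if -3/2 < y then (0, -1) else (-1, 0))"

primrec W2_orbit :: "real \<Rightarrow> real \<Rightarrow> nat \<Rightarrow> real" where
  "W2_orbit q t 0 = t"
| "W2_orbit q t (Suc m) = q\<^sup>2 * W2_orbit q t m - pair_value q (W2_digit (q\<^sup>2 * W2_orbit q t m))"

lemma W2_digit_in_W2: "W2_digit y \<in> W2"
  by (simp add: W2_digit_def W2_def)

lemma W2_digit_approx:
  assumes "198/100 \<le> q" "q \<le> 201/100" "\<bar>y\<bar> \<le> 3/5 * q\<^sup>2"
  shows "\<bar>y - pair_value q (W2_digit y)\<bar> \<le> 3/5"
proof -
  have "q\<^sup>2 \<le> (201/100)\<^sup>2"
    using assms by (intro power_mono) auto
  then have "\<bar>y\<bar> \<le> 3/5 * (201/100)\<^sup>2"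
    using assms(3) by linarith
  with assms(1,2) show ?thesis
    unfolding W2_digit_def pair_value_def by (auto simp: power2_eq_square abs_le_iff) (auto simp: abs_if)
qed

lemma W2_orbit_bounded:
  assumes "198/100 \<le> q" "q \<le> 201/100" "\<bar>t\<bar> \<le> 3/5"
  shows "\<bar>W2_orbit q t m\<bar> \<le> 3/5"
proof (induction m)
  case (Suc m)
  have "\<bar>q\<^sup>2 * W2_orbit q t m\<bar> = q\<^sup>2 * \<bar>W2_orbit q t m\<bar>"
    by (simp add: abs_mult)
  also have "\<dots> \<le> q\<^sup>2 * (3/5)"
    using Suc by (intro mult_left_mono) auto
  finally have "\<bar>q\<^sup>2 * W2_orbit q t m\<bar> \<le> 3/5 * q\<^sup>2"
    by simp
  then show ?case
    using W2_digit_approx assms by simp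
qed (use assms in simp)

lemma W2_expansion:
  assumes "198/100 \<le> q" "q \<le> 201/100" "\<bar>t\<bar> \<le> 3/5"
  shows "\<exists>e. (\<forall>m. e m \<in> W2) \<and> (\<lambda>m. pair_value q (e m) / (q\<^sup>2) ^ (m + 1)) sums t"
proof (intro exI conjI allI)
  let ?e = "\<lambda>m. W2_digit (q\<^sup>2 * W2_orbit q t m)"
  show "?e m \<in> W2" for m
    by (rule W2_digit_in_W2)
  have "1 < q\<^sup>2"
    using assms by (simp add: less_1_mult power2_eq_square)
  then have "(\<lambda>m. pair_value q (?e m) / (q\<^sup>2) ^ (m + 1)) sums W2_orbit q t 0"
    using W2_orbit_bounded[OF assms] by (intro orbit_expansion_sums[where B = "3/5"]) auto
  then show "(\<lambda>m. pair_value q (?e m) / (q\<^sup>2) ^ (m + 1)) sums t"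
    by simp
qed

definition interleave :: "(nat \<Rightarrow> int \<times> int) \<Rightarrow> nat \<Rightarrow> int" where
  "interleave e n = (if even n then fst (e (n div 2)) else snd (e (n div 2)))"

definition pattern_seq :: "nat \<Rightarrow> (nat \<Rightarrow> int \<times> int) \<Rightarrow> nat \<Rightarrow> int" where
  "pattern_seq k e n =
     (if n < k then 1 else if n < 2 * k + 4 then 0 else interleave e (n - (2 * k + 4)))"

lemma interleave_W2_bound:
  assumes "\<forall>m. e m \<in> W2"
  shows "\<bar>interleave e n\<bar> \<le> 1"
  using assms[rule_format, of "n div 2"] by (auto simp: interleave_def W2_def)

lemma in_pattern_pattern_seq:
  assumes "\<forall>m. e m \<in> W2"
  shows "in_pattern k (pattern_seq k e)"
proof -
  have "2 * k + 5 + 2 * m - (2 * k + 4) = Suc (2 * m)" for m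
    by simp
  then show ?thesis
    using assms by (simp add: in_pattern_def pattern_seq_def interleave_def)
qed

lemma sums_of_pair_sums:
  fixes f :: "nat \<Rightarrow> real"
  assumes "summable f" "(\<lambda>m. f (2 * m) + f (2 * m + 1)) sums s"
  shows "f sums s"
proof -
  have "(\<lambda>m. sum f {m * 2..<m * 2 + 2}) sums suminf f"
    using sums_group[OF summable_sums[OF assms(1)], of 2] by simp
  moreover have "sum f {m * 2..<m * 2 + 2} = f (2 * m) + f (2 * m + 1)" for m
    by (simp add: numeral_2_eq_2 mult.commute)
  ultimately have "s = suminf f"
    using assms(2) sums_unique2 by force
  then show ?thesis
    using assms(1) by (simp add: summable_sums)
qed

lemma interleave_sums:
  assumes q: "1 < q" and bound: "\<And>n. \<bar>interleave e n\<bar> \<le> B"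
    and tail: "(\<lambda>m. pair_value q (e m) / (q\<^sup>2) ^ (m + 1)) sums t"
  shows "(\<lambda>n. of_int (interleave e n) / q ^ (n + 1)) sums t"
proof (rule sums_of_pair_sums)
  show "summable (\<lambda>n. of_int (interleave e n) / q ^ (n + 1))"
  proof (rule summable_comparison_test')
    show "summable (\<lambda>n. B / q * (1 / q) ^ n)"
      using q by (intro summable_mult summable_geometric) auto
    show "norm (of_int (interleave e n) / q ^ (n + 1)) \<le> B / q * (1 / q) ^ n" for n
      using q bound[of n] by (simp add: abs_divide power_one_over divide_right_mono)
  qed
  have "of_int (interleave e (2 * m)) / q ^ (2 * m + 1) + of_int (interleave e (2 * m + 1)) / q ^ (2 * m + 1 + 1)
      = pair_value q (e m) / (q\<^sup>2) ^ (m + 1)" for m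
    using q by (simp add: interleave_def pair_value_def field_simps power_mult power2_eq_square)
  then show "(\<lambda>m. of_int (interleave e (2 * m)) / q ^ (2 * m + 1)
      + of_int (interleave e (2 * m + 1)) / q ^ (2 * m + 1 + 1)) sums t"
    using tail by simp
qed

lemma pattern_seq_sums:
  assumes q: "1 < q" and bound: "\<And>n. \<bar>interleave e n\<bar> \<le> B"
    and tail: "(\<lambda>m. pair_value q (e m) / (q\<^sup>2) ^ (m + 1)) sums t"
  shows "(\<lambda>n. of_int (pattern_seq k e n) / q ^ (n + 1)) sums (recip_sum k q + t / q ^ (2 * k + 4))"
proof -
  let ?f = "\<lambda>n. of_int (pattern_seq k e n) / q ^ (n + 1)"
  have "(\<lambda>n. of_int (interleave e n) / q ^ (n + 1) / q ^ (2 * k + 4)) sums (t / q ^ (2 * k + 4))"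
    using interleave_sums[OF q bound tail] by (rule sums_divide)
  moreover have "?f (n + (2 * k + 4)) = of_int (interleave e n) / q ^ (n + 1) / q ^ (2 * k + 4)" for n
  proof -
    have "q ^ (n + (2 * k + 4) + 1) = q ^ (n + 1) * q ^ (2 * k + 4)"
      unfolding power_add[symmetric] by (simp add: ac_simps)
    then show ?thesis
      by (simp add: pattern_seq_def)
  qed
  ultimately have "(\<lambda>n. ?f (n + (2 * k + 4))) sums (t / q ^ (2 * k + 4))"
    by simp
  then have "?f sums (t / q ^ (2 * k + 4) + (\<Sum>n<2 * k + 4. ?f n))"
    by (rule sums_iff_shift[THEN iffD1])
  moreover have "(\<Sum>n<2 * k + 4. ?f n) = (\<Sum>n<k. ?f n)"
    by (intro sum.mono_neutral_right) (auto simp: pattern_seq_def)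
  moreover have "(\<Sum>n<k. ?f n) = recip_sum k q"
    by (simp add: recip_sum_def pattern_seq_def)
  ultimately show ?thesis
    by (simp add: add.commute)
qed

theorem lemma4p1:
  fixes k :: nat and q :: real
  assumes "k \<ge> 9"
    and "\<bar>q - qk k\<bar> \<le> qk k powi (- (2 * int k + 6))"
  shows "\<exists>c. in_pattern k c \<and> (\<lambda>n. real_of_int (c n) / q ^ (n + 1)) sums 1"
proof -
  have "qk k powi (- (2 * int k + 6)) = qk k powi (- int (2 * k + 6))"
    by simp
  also have "\<dots> = 1 / qk k ^ (2 * k + 6)"
    by (simp only: power_int_minus_divide power_int_of_nat)
  finally have "qk k powi (- (2 * int k + 6)) = 1 / qk k ^ (2 * k + 6)" .
  then have close: "\<bar>q - qk k\<bar> \<le> 1 / qk k ^ (2 * k + 6)"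
    using assms(2) by simp
  note q = close_to_qk_bounds[OF assms(1) close] rescaled_defect_close_to_qk[OF assms(1) close]
  define t where "t = (1 - recip_sum k q) * q ^ (2 * k + 4)"
  have "\<bar>t\<bar> \<le> 3/5"
    using q by (simp add: t_def abs_mult)
  then obtain e where e: "\<forall>m. e m \<in> W2" "(\<lambda>m. pair_value q (e m) / (q\<^sup>2) ^ (m + 1)) sums t"
    using W2_expansion q by blast
  have "(\<lambda>n. of_int (pattern_seq k e n) / q ^ (n + 1)) sums (recip_sum k q + t / q ^ (2 * k + 4))"
    using q interleave_W2_bound[OF e(1)] e(2) by (intro pattern_seq_sums) auto
  moreover have "recip_sum k q + t / q ^ (2 * k + 4) = 1"
    using q by (simp add: t_def)
  ultimately show ?thesis
    using in_pattern_pattern_seq[OF e(1)] by auto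
qed

end
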